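(* For $d,n\in\mathbb{N}$, let $h_c=h_c(d,n)$ be the smallest positive integer with the following property: whenever $\mathcal{F}_1,\dots,\mathcal{F}_{h_c}$ are collections of axis-parallel boxes in $\mathbb{R}^d$ such that every colorful $h_c$-tuple is $n$-pierceable, there exists $i\in[h_c]$ such that $\mathcal{F}_i$ is $n$-pierceable. Then (1) $h_c(1,n)=n+1$ for all $n\in\mathbb{N}$, and (2) $h_c(d,2)=3d$ for all $d\in\mathbb{N}$.
   Context: An axis-parallel box in $\mathbb{R}^d$ is a set $[\alpha_1,\beta_1]\times\dots\times[\alpha_d,\beta_d]$ with $\alpha_j\le\beta_j$ real (for $d=1$, a closed interval). A family $\mathcal{F}$ of subsets of $\mathbb{R}^d$ is $n$-pierceable if there is a set $A\subseteq\mathbb{R}^d$ with $|A|\le n$ such that $F\cap A\neq\emptyset$ for every $F\in\mathcal{F}$. Given families $\mathcal{F}_1,\dots,\mathcal{F}_m$, a colorful $t$-tuple is a tuple $(C_1,\dots,C_t)$ such that for each $j\in[t]$ there is $i_j\in[m]$ with $C_j\in\mathcal{F}_{i_j}$, and $i_j\neq i_k$ for $j\neq k$. $[m]=\{1,\dots,m\}$. *)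

theory Defs
  imports Complex_Main
begin

text \<open>Points of R^d are represented as functions nat => real that vanish
  at all coordinates j >= d (coordinates 0..d-1 are the d real coordinates).\<close>

definition euclid :: "nat \<Rightarrow> (nat \<Rightarrow> real) set" where
  "euclid d = {x. \<forall>j\<ge>d. x j = 0}"

definition is_box :: "nat \<Rightarrow> (nat \<Rightarrow> real) set \<Rightarrow> bool" where
  "is_box d B \<longleftrightarrow> (\<exists>a b. (\<forall>j<d. a j \<le> b j) \<and>
      B = {x \<in> euclid d. \<forall>j<d. a j \<le> x j \<and> x j \<le> b j})"

definition pierceable :: "nat \<Rightarrow> nat \<Rightarrow> (nat \<Rightarrow> real) set set \<Rightarrow> bool" where
  "pierceable d n \<F> \<longleftrightarrow> (\<exists>A. A \<subseteq> euclid d \<and> finite A \<and> card A \<le> n \<and>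
      (\<forall>F\<in>\<F>. F \<inter> A \<noteq> {}))"

definition colorful :: "(nat \<Rightarrow> 'a set) \<Rightarrow> nat \<Rightarrow> nat \<Rightarrow> (nat \<Rightarrow> 'a) \<Rightarrow> bool" where
  "colorful \<F> m t C \<longleftrightarrow> (\<exists>\<sigma>. inj_on \<sigma> {1..t} \<and> \<sigma> ` {1..t} \<subseteq> {1..m} \<and>
      (\<forall>j\<in>{1..t}. C j \<in> \<F> (\<sigma> j)))"

definition hc_property :: "nat \<Rightarrow> nat \<Rightarrow> nat \<Rightarrow> bool" where
  "hc_property d n h \<longleftrightarrow>
     (\<forall>\<F> :: nat \<Rightarrow> (nat \<Rightarrow> real) set set.
        (\<forall>i\<in>{1..h}. finite (\<F> i) \<and> (\<forall>B\<in>\<F> i. is_box d B)) \<and>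
        (\<forall>C. colorful \<F> h h C \<longrightarrow> pierceable d n (C ` {1..h}))
        \<longrightarrow> (\<exists>i\<in>{1..h}. pierceable d n (\<F> i)))"

definition hc :: "nat \<Rightarrow> nat \<Rightarrow> nat" where
  "hc d n = (LEAST h. 0 < h \<and> hc_property d n h)"

end

theory Submission
  imports Defs "HOL-Library.Disjoint_Sets"
begin

text \<open>
  Dimension one: if none of \<open>n + 1\<close> families of intervals is \<open>n\<close>-pierceable, take the interval
  with the leftmost right endpoint \<open>m\<close> among all of them; in every other family the intervals
  avoiding \<open>m\<close> are not \<open>(n - 1)\<close>-pierceable and lie to the right of \<open>m\<close>. Iterating yields
  \<open>n + 1\<close> pairwise disjoint intervals from distinct families, a colorful tuple that is not
  \<open>n\<close>-pierceable. Conversely, \<open>n\<close> copies of a family of \<open>n + 1\<close> disjoint points show that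
  \<open>n\<close> families do not suffice.

  Two points in dimension \<open>d\<close>: from \<open>2d\<close> of \<open>3d\<close> families that are not 2-pierceable pick,
  for each coordinate \<open>j\<close>, a box \<open>R j\<close> whose right end \<open>r j\<close> and a box \<open>L j\<close> whose left end
  \<open>l j\<close> is extremal among all boxes still available. Sign vectors \<open>s \<subseteq> {..<d}\<close> name the
  pairs of opposite corners of the grid \<open>\<Prod>j. {l j, r j}\<close>; the pairs met by every box of a
  set form an affine subspace of \<open>GF(2)\<^sup>d\<close>, closed under complement. Since no family is
  pierced by a pair of corners, a box from each of the remaining \<open>d\<close> families can be chosen
  to halve this subspace, which therefore ends up empty. Yet if two points \<open>p\<close>, \<open>q\<close> pierced
  the resulting colorful tuple, the sign vector \<open>{j. p j \<le> r j}\<close> would survive. For the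
  lower bound, \<open>3d - 1\<close> explicit families of three disjoint boxes in \<open>[0,4]\<^sup>d\<close> have all
  their transversals pierced by two points.
\<close>

section \<open>Boxes and piercing\<close>

definition box_lo :: "(nat \<Rightarrow> real) set \<Rightarrow> nat \<Rightarrow> real" where
  "box_lo B j = Inf ((\<lambda>x. x j) ` B)"

definition box_hi :: "(nat \<Rightarrow> real) set \<Rightarrow> nat \<Rightarrow> real" where
  "box_hi B j = Sup ((\<lambda>x. x j) ` B)"

definition prod_box :: "nat \<Rightarrow> (nat \<Rightarrow> real set) \<Rightarrow> (nat \<Rightarrow> real) set" where
  "prod_box d I = {x \<in> euclid d. \<forall>j<d. x j \<in> I j}"

lemma coord_image_box:
  assumes "\<forall>j<d. a j \<le> b j" "j < d"
  shows "(\<lambda>x. x j) ` {x \<in> euclid d. \<forall>j<d. a j \<le> x j \<and> x j \<le> b j} = {a j..b j}"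
proof
  show "{a j..b j} \<subseteq> (\<lambda>x. x j) ` {x \<in> euclid d. \<forall>j<d. a j \<le> x j \<and> x j \<le> b j}"
  proof
    fix t assume t: "t \<in> {a j..b j}"
    define x where "x i = (if i = j then t else if i < d then a i else 0)" for i
    have "x \<in> euclid d" "\<forall>i<d. a i \<le> x i \<and> x i \<le> b i"
      using assms t unfolding euclid_def x_def by auto
    then show "t \<in> (\<lambda>x. x j) ` {x \<in> euclid d. \<forall>j<d. a j \<le> x j \<and> x j \<le> b j}"
      by (intro image_eqI[of _ _ x]) (auto simp: x_def)
  qed
qed (use assms in auto)

lemma mem_box_iff:
  assumes "is_box d B"
  shows "x \<in> B \<longleftrightarrow> x \<in> euclid d \<and> (\<forall>j<d. box_lo B j \<le> x j \<and> x j \<le> box_hi B j)"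
proof -
  obtain a b where ab: "\<forall>j<d. a j \<le> b j"
    and B: "B = {x \<in> euclid d. \<forall>j<d. a j \<le> x j \<and> x j \<le> b j}"
    using assms unfolding is_box_def by blast
  have "box_lo B j = a j \<and> box_hi B j = b j" if "j < d" for j
    using coord_image_box[OF ab that] ab that unfolding box_lo_def box_hi_def B by simp
  then show ?thesis
    using B by auto
qed

lemma is_box_prod_box:
  assumes "\<forall>j<d. \<exists>a b. a \<le> b \<and> I j = {a..b}"
  shows "is_box d (prod_box d I)"
proof -
  obtain a b where "\<forall>j<d. a j \<le> b j \<and> I j = {a j..b j}"
    using assms by metis
  then show ?thesis
    unfolding is_box_def prod_box_def by (intro exI[of _ a] exI[of _ b]) auto
qed

lemma prod_box_disjoint:
  assumes "j < d" "I j \<inter> J j = {}"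
  shows "prod_box d I \<inter> prod_box d J = {}"
  using assms unfolding prod_box_def by blast

lemma pierceable_empty: "pierceable d n {}"
  unfolding pierceable_def by (intro exI[of _ "{}"]) simp

lemma pierceable_subset:
  assumes "pierceable d n \<G>" "\<F> \<subseteq> \<G>"
  shows "pierceable d n \<F>"
  using assms unfolding pierceable_def by blast

lemma pierceable_insert_point:
  assumes "pierceable d n {F \<in> \<F>. p \<notin> F}" "p \<in> euclid d"
  shows "pierceable d (Suc n) \<F>"
proof -
  obtain A where A: "A \<subseteq> euclid d" "finite A" "card A \<le> n" "\<forall>F\<in>\<F>. p \<notin> F \<longrightarrow> F \<inter> A \<noteq> {}"
    using assms(1) unfolding pierceable_def by auto
  have "card (insert p A) \<le> Suc n"
    using A(2,3) by (simp add: card_insert_if)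
  with A assms(2) show ?thesis
    unfolding pierceable_def by (intro exI[of _ "insert p A"]) auto
qed

lemma pierceable_card_le:
  assumes "finite \<F>" "card \<F> \<le> n" "\<forall>F\<in>\<F>. F \<noteq> {} \<and> F \<subseteq> euclid d"
  shows "pierceable d n \<F>"
proof -
  define A where "A = (\<lambda>F. SOME x. x \<in> F) ` \<F>"
  have some_in: "(SOME x. x \<in> F) \<in> F" if "F \<in> \<F>" for F
    using assms(3) that by (simp add: some_in_eq)
  have "A \<subseteq> euclid d" "\<forall>F\<in>\<F>. F \<inter> A \<noteq> {}"
    using some_in assms(3) unfolding A_def by blast+
  moreover have "finite A" "card A \<le> n"
    unfolding A_def using assms(1,2) card_image_le le_trans by blast+
  ultimately show ?thesis
    unfolding pierceable_def by blast
qed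

lemma not_pierceable_if_disjoint:
  assumes "finite I" "n < card I" "\<forall>i\<in>I. X i \<in> \<F>" "disjoint_family_on X I"
  shows "\<not> pierceable d n \<F>"
proof
  assume "pierceable d n \<F>"
  then obtain A where A: "finite A" "card A \<le> n" "\<forall>F\<in>\<F>. F \<inter> A \<noteq> {}"
    unfolding pierceable_def by auto
  have "\<forall>i\<in>I. \<exists>x. x \<in> X i \<inter> A"
    using A(3) assms(3) by blast
  then obtain \<phi> where \<phi>: "\<forall>i\<in>I. \<phi> i \<in> X i \<inter> A"
    by (rule bchoice[elim_format]) blast
  have "inj_on \<phi> I"
  proof (rule inj_onI)
    fix i j assume "i \<in> I" "j \<in> I" "\<phi> i = \<phi> j"
    then have "\<phi> i \<in> X i \<inter> X j"
      using \<phi> by auto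
    then show "i = j"
      using assms(4) \<open>i \<in> I\<close> \<open>j \<in> I\<close> unfolding disjoint_family_on_def by blast
  qed
  then have "card I \<le> card A"
    using \<phi> A(1) by (intro card_inj_on_le) auto
  with A(2) assms(2) show False by simp
qed

lemma colorful_id:
  assumes "t \<le> m" "\<forall>j\<in>{1..t}. C j \<in> \<F> j"
  shows "colorful \<F> m t C"
  using assms unfolding colorful_def by (intro exI[of _ id]) auto

lemma exists_choice_extending:
  assumes "\<forall>i\<in>I. F i \<noteq> {}" "\<forall>i\<in>S. h i \<in> F i"
  obtains C where "\<forall>i\<in>I. C i \<in> F i" "\<forall>i\<in>S. C i = h i"
proof
  let ?C = "\<lambda>i. if i \<in> S then h i else SOME B. B \<in> F i"
  show "\<forall>i\<in>I. ?C i \<in> F i"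
    using assms by (simp add: some_in_eq)
  show "\<forall>i\<in>S. ?C i = h i"
    by simp
qed

lemma colorful_subset_transversal:
  assumes "colorful \<F> m t C" "m \<le> m'" "\<forall>i\<in>{1..m'}. \<F> i \<noteq> {}"
  obtains T where "\<forall>i\<in>{1..m'}. T i \<in> \<F> i" "C ` {1..t} \<subseteq> T ` {1..m'}"
proof -
  obtain \<sigma> where \<sigma>: "inj_on \<sigma> {1..t}" "\<sigma> ` {1..t} \<subseteq> {1..m}" "\<forall>j\<in>{1..t}. C j \<in> \<F> (\<sigma> j)"
    using assms(1) unfolding colorful_def by blast
  have "\<forall>i\<in>\<sigma> ` {1..t}. C (inv_into {1..t} \<sigma> i) \<in> \<F> i"
    using \<sigma>(1,3) by auto
  with assms(3) obtain T where T: "\<forall>i\<in>{1..m'}. T i \<in> \<F> i"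
    and T_\<sigma>: "\<forall>i\<in>\<sigma> ` {1..t}. T i = C (inv_into {1..t} \<sigma> i)"
    by (rule exists_choice_extending)
  have "C j = T (\<sigma> j)" "\<sigma> j \<in> {1..m'}" if "j \<in> {1..t}" for j
    using that T_\<sigma> \<sigma>(1,2) assms(2) by force+
  then have "C ` {1..t} \<subseteq> T ` {1..m'}"
    by blast
  with T show ?thesis
    by (rule that)
qed

lemma hc_eqI:
  assumes "0 < h" "hc_property d n h" "\<And>h'. 0 < h' \<Longrightarrow> h' < h \<Longrightarrow> \<not> hc_property d n h'"
  shows "hc d n = h"
  unfolding hc_def
  by (rule Least_equality) (use assms in \<open>auto simp: not_less[symmetric]\<close>)

section \<open>Dimension one\<close>

lemma disjoint_transversal_of_intervals:
  assumes "finite I" "card I = Suc k"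
    and "\<forall>c\<in>I. finite (G c) \<and> (\<forall>B\<in>G c. is_box 1 B) \<and> \<not> pierceable 1 k (G c)"
  shows "\<exists>h. (\<forall>c\<in>I. h c \<in> G c) \<and> disjoint_family_on h I"
  using assms
proof (induction k arbitrary: I G)
  case 0
  then obtain c where "I = {c}"
    by (metis One_nat_def card_1_singletonE)
  moreover obtain B where "B \<in> G c"
    using 0(3) pierceable_empty \<open>I = {c}\<close> by fastforce
  ultimately show ?case
    by (intro exI[of _ "\<lambda>_. B"]) (simp add: disjoint_family_on_def)
next
  case (Suc k)
  define M where "M = (\<Union>c\<in>I. G c)"
  have "G c \<noteq> {}" if "c \<in> I" for c
    using Suc.prems(3) pierceable_empty that by metis
  moreover have "I \<noteq> {}"
    using Suc.prems(2) by auto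
  ultimately have "finite M" "M \<noteq> {}"
    unfolding M_def using Suc.prems(1,3) by auto
  then obtain B0 where "B0 \<in> M" and B0_min: "\<forall>B\<in>M. box_hi B0 0 \<le> box_hi B 0"
    using arg_min_if_finite[of M "\<lambda>B. box_hi B 0"] by (metis not_less)
  then obtain c0 where c0: "c0 \<in> I" "B0 \<in> G c0"
    unfolding M_def by blast
  define p where "p j = (if j = 0 then box_hi B0 0 else 0)" for j :: nat
  have p: "p \<in> euclid 1"
    unfolding p_def euclid_def by simp
  define G' where "G' c = {B \<in> G c. p \<notin> B}" for c
  \<comment> \<open>A box avoiding the leftmost right endpoint lies strictly to its right.\<close>
  have B0_disjoint: "B0 \<inter> B = {}" if "B \<in> M" "p \<notin> B" for B
  proof -
    have "is_box 1 B" "is_box 1 B0"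
      using Suc.prems(3) \<open>B \<in> M\<close> \<open>B0 \<in> M\<close> unfolding M_def by auto
    moreover have "box_hi B0 0 < box_lo B 0"
      using that B0_min p mem_box_iff[OF \<open>is_box 1 B\<close>, of p] unfolding p_def by force
    ultimately show ?thesis
      using mem_box_iff by fastforce
  qed
  have "\<not> pierceable 1 k (G' c)" if "c \<in> I - {c0}" for c
    using Suc.prems(3) that pierceable_insert_point[OF _ p, of k "G c"] unfolding G'_def by auto
  moreover have "card (I - {c0}) = Suc k"
    using Suc.prems(1,2) c0(1) by simp
  ultimately obtain h where h: "\<forall>c\<in>I - {c0}. h c \<in> G' c" "disjoint_family_on h (I - {c0})"
    using Suc.IH[of "I - {c0}" G'] Suc.prems(1,3) unfolding G'_def by auto
  have "I = insert c0 (I - {c0})"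
    using c0(1) by blast
  moreover have "B0 \<inter> (\<Union>c\<in>I - {c0}. h c) = {}"
    using h(1) B0_disjoint unfolding G'_def M_def by blast
  ultimately have "disjoint_family_on (h(c0 := B0)) I"
    using h(2) disjoint_family_on_insert[of c0 "I - {c0}" "h(c0 := B0)"]
    by (auto simp: disjoint_family_on_def)
  moreover have "\<forall>c\<in>I. (h(c0 := B0)) c \<in> G c"
    using h(1) c0 unfolding G'_def by auto
  ultimately show ?case
    by blast
qed

lemma hc_property_one_upper: "hc_property 1 n (Suc n)"
  unfolding hc_property_def
proof (intro allI impI)
  fix F :: "nat \<Rightarrow> (nat \<Rightarrow> real) set set"
  assume F: "(\<forall>i\<in>{1..Suc n}. finite (F i) \<and> (\<forall>B\<in>F i. is_box 1 B)) \<and>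
    (\<forall>C. colorful F (Suc n) (Suc n) C \<longrightarrow> pierceable 1 n (C ` {1..Suc n}))"
  show "\<exists>i\<in>{1..Suc n}. pierceable 1 n (F i)"
  proof (rule ccontr)
    assume "\<not> ?thesis"
    then obtain h where h: "\<forall>c\<in>{1..Suc n}. h c \<in> F c" "disjoint_family_on h {1..Suc n}"
      using F disjoint_transversal_of_intervals[of "{1..Suc n}" n F] by auto
    then have "pierceable 1 n (h ` {1..Suc n})"
      using F colorful_id[of "Suc n" "Suc n" h F] by auto
    moreover have "\<not> pierceable 1 n (h ` {1..Suc n})"
      using h(2) by (intro not_pierceable_if_disjoint) auto
    ultimately show False
      by contradiction
  qed
qed

lemma hc_property_one_lower:
  assumes "0 < h" "h \<le> n"
  shows "\<not> hc_property 1 n h"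
proof
  define point where "point k = prod_box 1 (\<lambda>_. {real k..real k})" for k :: nat
  define F where "F i = point ` {0..n}" for i :: nat
  assume "hc_property 1 n h"
  moreover have "is_box 1 (point k)" for k
    unfolding point_def by (rule is_box_prod_box) blast
  then have "\<forall>i\<in>{1..h}. finite (F i) \<and> (\<forall>B\<in>F i. is_box 1 B)"
    unfolding F_def by auto
  moreover have "pierceable 1 n (C ` {1..h})" if "colorful F h h C" for C
  proof (rule pierceable_card_le)
    show "card (C ` {1..h}) \<le> n"
      using assms(2) card_image_le[of "{1..h}" C] by simp
    have "point k \<noteq> {} \<and> point k \<subseteq> euclid 1" for k
      unfolding point_def prod_box_def euclid_def
      by (auto intro!: exI[of _ "\<lambda>j. if j = 0 then real k else 0"])
    then show "\<forall>B\<in>C ` {1..h}. B \<noteq> {} \<and> B \<subseteq> euclid 1"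
      using that unfolding colorful_def F_def by fastforce
  qed simp
  ultimately obtain i where "i \<in> {1..h}" "pierceable 1 n (F i)"
    unfolding hc_property_def by blast
  moreover have "disjoint_family_on point {0..n}"
    unfolding disjoint_family_on_def point_def
    by (auto intro!: prod_box_disjoint[of 0])
  then have "\<not> pierceable 1 n (F i)"
    unfolding F_def by (intro not_pierceable_if_disjoint) auto
  ultimately show False
    by simp
qed

theorem hc_one: "hc 1 n = n + 1"
  using hc_property_one_upper hc_property_one_lower by (intro hc_eqI) auto

section \<open>Two points: the lower bound\<close>

definition P_intervals :: "real set set" where
  "P_intervals = {{0..1}, {2..3}, {4..4}}"

definition Q_intervals :: "real set set" where
  "Q_intervals = {{0..0}, {1..2}, {3..4}}"

definition M_intervals :: "(real set \<times> real set) set" where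
  "M_intervals = {({0..1}, {0..2}), ({0..1}, {3..4}), ({2..4}, {0..4})}"

abbreviation slab :: "nat \<Rightarrow> nat \<Rightarrow> real set \<Rightarrow> (nat \<Rightarrow> real) set" where
  "slab d k J \<equiv> prod_box d ((\<lambda>_. {0..4})(k := J))"

abbreviation coupling_box :: "nat \<Rightarrow> nat \<Rightarrow> real set \<Rightarrow> real set \<Rightarrow> (nat \<Rightarrow> real) set" where
  "coupling_box d k X Y \<equiv> prod_box d ((\<lambda>_. {0..4})(k := X, Suc k := Y))"

definition gadget_family :: "nat \<Rightarrow> nat \<Rightarrow> (nat \<Rightarrow> real) set set" where
  "gadget_family d i = (let k = (i - 1) div 3 in
     if (i - 1) mod 3 = 0 then slab d k ` P_intervals
     else if (i - 1) mod 3 = 1 then slab d k ` Q_intervals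
     else (\<lambda>(X, Y). coupling_box d k X Y) ` M_intervals)"

lemma gadget_family_P:
  "gadget_family d (3 * k + 1) = slab d k ` P_intervals"
  unfolding gadget_family_def by simp

lemma gadget_family_Q:
  "gadget_family d (3 * k + 2) = slab d k ` Q_intervals"
proof -
  have "(3 * k + 2 - 1) div 3 = k" "(3 * k + 2 - 1) mod 3 = 1"
    by (simp_all add: mod_Suc div_Suc)
  then show ?thesis
    unfolding gadget_family_def Let_def by simp
qed

lemma gadget_family_M:
  "gadget_family d (3 * k + 3) =
     (\<lambda>(X, Y). coupling_box d k X Y) ` M_intervals"
proof -
  have "(3 * k + 3 - 1) div 3 = k" "(3 * k + 3 - 1) mod 3 = 2"
    by (simp_all add: mod_Suc div_Suc)
  then show ?thesis
    unfolding gadget_family_def Let_def by simp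
qed

lemma mod3_cases:
  fixes i :: nat
  assumes "1 \<le> i"
  obtains k where "i = 3 * k + 1" | k where "i = 3 * k + 2" | k where "i = 3 * k + 3"
proof -
  have "i = 3 * ((i - 1) div 3) + (i - 1) mod 3 + 1" "(i - 1) mod 3 < 3"
    using assms by simp_all
  then consider "i = 3 * ((i - 1) div 3) + 1" | "i = 3 * ((i - 1) div 3) + 2"
    | "i = 3 * ((i - 1) div 3) + 3"
    by linarith
  then show ?thesis
    using that by metis
qed

lemma gadget_intervals_closed:
  "\<forall>J \<in> insert {0..4} (P_intervals \<union> Q_intervals \<union> fst ` M_intervals \<union> snd ` M_intervals).
     \<exists>a b. a \<le> b \<and> J = {a..b}"
proof -
  have closed: "\<exists>a' b'. a' \<le> b' \<and> {a..b} = {a'..b'}" if "a \<le> b" for a b :: real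
    using that by blast
  show ?thesis
    unfolding P_intervals_def Q_intervals_def M_intervals_def
    by (simp only: ball_simps Un_insert_left Un_empty_left image_insert image_empty fst_conv snd_conv)
      (intro conjI TrueI; rule closed; simp)
qed

lemma gadget_family_finite_nonempty: "finite (gadget_family d i) \<and> gadget_family d i \<noteq> {}"
  unfolding gadget_family_def Let_def P_intervals_def Q_intervals_def M_intervals_def by simp

lemma gadget_family_is_box:
  assumes "B \<in> gadget_family d i"
  shows "is_box d B"
proof -
  let ?S = "insert {0..4} (P_intervals \<union> Q_intervals \<union> fst ` M_intervals \<union> snd ` M_intervals)"
  have "\<exists>I. B = prod_box d I \<and> (\<forall>j. I j \<in> ?S)"
  proof -
    consider k J where "J \<in> P_intervals \<union> Q_intervals" "B = slab d k J"
      | k X Y where "(X, Y) \<in> M_intervals" "B = coupling_box d k X Y"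
      using assms unfolding gadget_family_def Let_def by (auto split: if_splits)
    then show ?thesis
    proof cases
      case (1 k J)
      then show ?thesis
        by (intro exI[of _ "(\<lambda>_. {0..4})(k := J)"]) auto
    next
      case (2 k X Y)
      then have "X \<in> fst ` M_intervals" "Y \<in> snd ` M_intervals"
        by force+
      with 2 show ?thesis
        by (intro exI[of _ "(\<lambda>_. {0..4})(k := X, Suc k := Y)"]) simp
    qed
  qed
  then show ?thesis
    using gadget_intervals_closed is_box_prod_box by metis
qed

lemma coupling_boxes_disjoint:
  assumes "Suc k < d" "X \<inter> X' = {} \<or> Y \<inter> Y' = {}"
  shows "coupling_box d k X Y \<inter>
    coupling_box d k X' Y' = {}"
  using assms(2)
proof
  assume "X \<inter> X' = {}"
  with assms(1) show ?thesis
    by (intro prod_box_disjoint[of k]) auto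
next
  assume "Y \<inter> Y' = {}"
  with assms(1) show ?thesis
    by (intro prod_box_disjoint[of "Suc k"]) auto
qed

lemma gadget_family_not_pierceable:
  assumes "1 \<le> i" "i \<le> 3 * d - 1"
  shows "\<not> pierceable d 2 (gadget_family d i)"
proof -
  have slices: "\<not> pierceable d 2 (slab d k ` S)"
    if "k < d" "S \<in> {P_intervals, Q_intervals}" for k S
  proof (rule not_pierceable_if_disjoint)
    show "finite S" "2 < card S"
      using that by (auto simp: P_intervals_def Q_intervals_def eq_commute[of "{0::real}"])
    have "disjoint S"
      using that(2) unfolding disjoint_def P_intervals_def Q_intervals_def by auto
    show "disjoint_family_on (slab d k) S"
      unfolding disjoint_family_on_def
    proof (intro ballI impI)
      fix J J' assume "J \<in> S" "J' \<in> S" "J \<noteq> J'"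
      with \<open>disjoint S\<close> have "J \<inter> J' = {}"
        by (rule disjointD)
      with that(1) show "slab d k J \<inter> slab d k J' = {}"
        by (simp add: prod_box_disjoint)
    qed
  qed simp
  have couplings:
    "\<not> pierceable d 2 ((\<lambda>(X, Y). coupling_box d k X Y) ` M_intervals)"
    if "Suc k < d" for k
  proof (rule not_pierceable_if_disjoint)
    show "finite M_intervals" "2 < card M_intervals"
      by (simp_all add: M_intervals_def)
    have M_disjoint: "\<forall>(X, Y)\<in>M_intervals. \<forall>(X', Y')\<in>M_intervals.
        (X, Y) \<noteq> (X', Y') \<longrightarrow> X \<inter> X' = {} \<or> Y \<inter> Y' = {}"
      unfolding M_intervals_def by auto
    show "disjoint_family_on (\<lambda>(X, Y). coupling_box d k X Y)
        M_intervals"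
      unfolding disjoint_family_on_def
    proof (intro ballI impI)
      fix p p' assume "p \<in> M_intervals" "p' \<in> M_intervals" "p \<noteq> p'"
      moreover obtain X Y X' Y' where "p = (X, Y)" "p' = (X', Y')"
        by fastforce
      ultimately have "X \<inter> X' = {} \<or> Y \<inter> Y' = {}"
        using M_disjoint by fast
      with \<open>p = (X, Y)\<close> \<open>p' = (X', Y')\<close>
      show "(case p of (X, Y) \<Rightarrow> coupling_box d k X Y) \<inter>
          (case p' of (X, Y) \<Rightarrow> coupling_box d k X Y) = {}"
        using coupling_boxes_disjoint[OF that] by simp
    qed
  qed simp
  from assms(1) show ?thesis
  proof (cases rule: mod3_cases)
    case (1 k)
    then have "k < d"
      using assms(2) by simp
    then show ?thesis
      unfolding 1 gadget_family_P using slices[of k] by simp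
  next
    case (2 k)
    then have "k < d"
      using assms(2) by simp
    then show ?thesis
      unfolding 2 gadget_family_Q using slices[of k] by simp
  next
    case (3 k)
    then have "Suc k < d"
      using assms(2) by simp
    then show ?thesis
      unfolding 3 gadget_family_M using couplings[of k] by simp
  qed
qed

text \<open>The one-dimensional core of the lower bound, checked by enumerating witnesses in
  \<open>{0, 1, 2, 3, 4}\<close>. The value \<open>u\<close> is taken by the point that also meets the coupling box of
  the previous coordinate, whose interval there is \<open>Y\<close>.\<close>

lemma gadget_two_values:
  fixes X Y P Q :: "real set"
  assumes "X \<in> insert {0..4} (fst ` M_intervals)" "Y \<in> insert {0..4} (snd ` M_intervals)"
    and "P \<in> P_intervals" "Q \<in> Q_intervals"
  shows "\<exists>u\<in>{0..4}. \<exists>v\<in>{0..4}.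
    u \<in> Y \<and> (u \<in> X \<or> v \<in> X) \<and> (u \<in> P \<or> v \<in> P) \<and> (u \<in> Q \<or> v \<in> Q)"
proof -
  have "\<exists>u\<in>{0, 1, 2, 3, 4}. \<exists>v\<in>{0, 1, 2, 3, 4}.
    u \<in> Y \<and> (u \<in> X \<or> v \<in> X) \<and> (u \<in> P \<or> v \<in> P) \<and> (u \<in> Q \<or> v \<in> Q)"
    using assms unfolding P_intervals_def Q_intervals_def M_intervals_def
    by (simp only: image_insert image_empty fst_conv snd_conv) (elim insertE emptyE; simp)
  moreover have "{0, 1, 2, 3, 4} \<subseteq> {0..4::real}"
    by simp
  ultimately show ?thesis
    by blast
qed

lemma two_points_chaining:
  fixes u v :: "nat \<Rightarrow> 'a" and X :: "nat \<Rightarrow> 'a set"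
  assumes "\<forall>k<n. u k \<in> X k \<or> v k \<in> X k"
  obtains p q where "\<forall>k. {p k, q k} = {u k, v k}"
    and "\<forall>k<n. \<exists>z\<in>{p, q}. z k \<in> X k \<and> z (Suc k) = u (Suc k)"
proof -
  \<comment> \<open>\<open>p\<close> takes the value \<open>u k\<close> exactly when \<open>side k\<close>; the side flips whenever \<open>u k \<notin> X k\<close>.\<close>
  define side where "side = rec_nat True (\<lambda>k b. b = (u k \<in> X k))"
  define p where "p k = (if side k then u k else v k)" for k
  define q where "q k = (if side k then v k else u k)" for k
  have "\<forall>k. {p k, q k} = {u k, v k}"
    unfolding p_def q_def by auto
  moreover have "\<forall>k<n. \<exists>z\<in>{p, q}. z k \<in> X k \<and> z (Suc k) = u (Suc k)"
    using assms unfolding p_def q_def side_def by auto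
  ultimately show ?thesis
    using that by blast
qed

lemma gadget_transversal_intervals:
  assumes "\<forall>i\<in>{1..3 * d - 1}. T i \<in> gadget_family d i"
  obtains P Q M where "\<forall>k<d. P k \<in> P_intervals \<and> T (3 * k + 1) = slab d k (P k)"
    and "\<forall>k<d. Q k \<in> Q_intervals \<and> T (3 * k + 2) = slab d k (Q k)"
    and "\<forall>k. Suc k < d \<longrightarrow> M k \<in> M_intervals \<and> T (3 * k + 3) = coupling_box d k (fst (M k)) (snd (M k))"
proof -
  have T: "T i \<in> gadget_family d i" if "1 \<le> i" "i < 3 * d" for i
    using assms that by auto
  have "\<exists>J\<in>P_intervals. T (3 * k + 1) = slab d k J" if "k < d" for k
    using T[of "3 * k + 1"] that unfolding gadget_family_P by auto
  then obtain P where "\<forall>k<d. P k \<in> P_intervals \<and> T (3 * k + 1) = slab d k (P k)"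
    by metis
  moreover have "\<exists>J\<in>Q_intervals. T (3 * k + 2) = slab d k J" if "k < d" for k
    using T[of "3 * k + 2"] that unfolding gadget_family_Q by auto
  then obtain Q where "\<forall>k<d. Q k \<in> Q_intervals \<and> T (3 * k + 2) = slab d k (Q k)"
    by metis
  moreover have "\<exists>XY\<in>M_intervals. T (3 * k + 3) = coupling_box d k (fst XY) (snd XY)"
    if "Suc k < d" for k
    using T[of "3 * k + 3"] that unfolding gadget_family_M by force
  then obtain M where
    "\<forall>k. Suc k < d \<longrightarrow> M k \<in> M_intervals \<and> T (3 * k + 3) = coupling_box d k (fst (M k)) (snd (M k))"
    by metis
  ultimately show ?thesis
    by (rule that)
qed

lemma gadget_two_points:
  assumes "\<forall>k<d. P k \<in> P_intervals \<and> Q k \<in> Q_intervals" "\<forall>k. Suc k < d \<longrightarrow> M k \<in> M_intervals"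
  obtains p q :: "nat \<Rightarrow> real" where "\<forall>z\<in>{p, q}. \<forall>j<d. z j \<in> {0..4}"
    and "\<forall>k<d. (\<exists>z\<in>{p, q}. z k \<in> P k) \<and> (\<exists>z\<in>{p, q}. z k \<in> Q k)"
    and "\<forall>k. Suc k < d \<longrightarrow> (\<exists>z\<in>{p, q}. z k \<in> fst (M k) \<and> z (Suc k) \<in> snd (M k))"
proof -
  define X where "X k = (if Suc k < d then fst (M k) else {0..4})" for k
  define Y where "Y k = (if k = 0 then {0..4} else snd (M (k - 1)))" for k
  have XY_range: "X k \<in> insert {0..4} (fst ` M_intervals)" "Y k \<in> insert {0..4} (snd ` M_intervals)"
    if "k < d" for k
    using assms(2) that unfolding X_def Y_def by auto
  then have "\<exists>a\<in>{0..4}. \<exists>b\<in>{0..4}. a \<in> Y k \<and> (a \<in> X k \<or> b \<in> X k) \<and>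
      (a \<in> P k \<or> b \<in> P k) \<and> (a \<in> Q k \<or> b \<in> Q k)" if "k < d" for k
    using XY_range[OF that] assms(1) that by (intro gadget_two_values) simp_all
  then obtain u v where uv: "\<And>k. k < d \<Longrightarrow> u k \<in> {0..4} \<and> v k \<in> {0..4} \<and>
     u k \<in> Y k \<and> (u k \<in> X k \<or> v k \<in> X k) \<and> (u k \<in> P k \<or> v k \<in> P k) \<and> (u k \<in> Q k \<or> v k \<in> Q k)"
    by metis
  then have "\<forall>k<d. u k \<in> X k \<or> v k \<in> X k"
    by blast
  then obtain p q where pq: "\<forall>k. {p k, q k} = {u k, v k}"
    and chain: "\<forall>k<d. \<exists>z\<in>{p, q}. z k \<in> X k \<and> z (Suc k) = u (Suc k)"
    by (rule two_points_chaining)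
  have pick: "\<exists>z\<in>{p, q}. z k \<in> J" if "u k \<in> J \<or> v k \<in> J" for k J
  proof -
    have "{u k, v k} \<subseteq> {p k, q k}"
      using pq by simp
    with that have "p k \<in> J \<or> q k \<in> J"
      by auto
    then show ?thesis
      by auto
  qed
  have "\<forall>z\<in>{p, q}. \<forall>j<d. z j \<in> {0..4}"
  proof (intro ballI allI impI)
    fix z j assume "z \<in> {p, q}" "j < d"
    then have "z j \<in> {u j, v j}"
      using pq[rule_format, of j] by blast
    then show "z j \<in> {0..4}"
      using uv[OF \<open>j < d\<close>] by auto
  qed
  moreover have "\<forall>k<d. (\<exists>z\<in>{p, q}. z k \<in> P k) \<and> (\<exists>z\<in>{p, q}. z k \<in> Q k)"
  proof (intro allI impI)
    fix k assume "k < d"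
    then have "u k \<in> P k \<or> v k \<in> P k" "u k \<in> Q k \<or> v k \<in> Q k"
      using uv by blast+
    then show "(\<exists>z\<in>{p, q}. z k \<in> P k) \<and> (\<exists>z\<in>{p, q}. z k \<in> Q k)"
      using pick[of k "P k"] pick[of k "Q k"] by blast
  qed
  moreover have "\<forall>k. Suc k < d \<longrightarrow> (\<exists>z\<in>{p, q}. z k \<in> fst (M k) \<and> z (Suc k) \<in> snd (M k))"
  proof (intro allI impI)
    fix k assume "Suc k < d"
    then obtain z where z: "z \<in> {p, q}" "z k \<in> X k" "z (Suc k) = u (Suc k)"
      using chain Suc_lessD by blast
    have "u (Suc k) \<in> Y (Suc k)"
      using uv[OF \<open>Suc k < d\<close>] by blast
    moreover have "X k = fst (M k)" "Y (Suc k) = snd (M k)"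
      using \<open>Suc k < d\<close> unfolding X_def Y_def by simp_all
    ultimately show "\<exists>z\<in>{p, q}. z k \<in> fst (M k) \<and> z (Suc k) \<in> snd (M k)"
      using z by auto
  qed
  ultimately show ?thesis
    by (rule that)
qed

lemma gadget_transversal_pierceable:
  assumes "\<forall>i\<in>{1..3 * d - 1}. T i \<in> gadget_family d i"
  shows "pierceable d 2 (T ` {1..3 * d - 1})"
proof -
  obtain P Q M where P: "\<forall>k<d. P k \<in> P_intervals \<and> T (3 * k + 1) = slab d k (P k)"
    and Q: "\<forall>k<d. Q k \<in> Q_intervals \<and> T (3 * k + 2) = slab d k (Q k)"
    and M: "\<forall>k. Suc k < d \<longrightarrow> M k \<in> M_intervals \<and> T (3 * k + 3) = coupling_box d k (fst (M k)) (snd (M k))"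
    using assms by (rule gadget_transversal_intervals)
  have "\<forall>k<d. P k \<in> P_intervals \<and> Q k \<in> Q_intervals" "\<forall>k. Suc k < d \<longrightarrow> M k \<in> M_intervals"
    using P Q M by simp_all
  then obtain p q where range: "\<forall>z\<in>{p, q}. \<forall>j<d. z j \<in> {0..4}"
    and slabs: "\<forall>k<d. (\<exists>z\<in>{p, q}. z k \<in> P k) \<and> (\<exists>z\<in>{p, q}. z k \<in> Q k)"
    and couplings: "\<forall>k. Suc k < d \<longrightarrow> (\<exists>z\<in>{p, q}. z k \<in> fst (M k) \<and> z (Suc k) \<in> snd (M k))"
    by (rule gadget_two_points)
  define cut where "cut z j = (if j < d then z j else 0)" for z :: "nat \<Rightarrow> real" and j
  have in_slab: "cut z \<in> slab d k J" if "z \<in> {p, q}" "z k \<in> J" for z k J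
    using that range unfolding prod_box_def euclid_def cut_def by auto
  have in_coupling: "cut z \<in> coupling_box d k X Y" if "z \<in> {p, q}" "z k \<in> X" "z (Suc k) \<in> Y" for z k X Y
    using that range unfolding prod_box_def euclid_def cut_def by auto
  have "\<exists>z\<in>{p, q}. cut z \<in> T i" if "1 \<le> i" "i \<le> 3 * d - 1" for i
    using that(1)
  proof (cases rule: mod3_cases)
    case (1 k)
    then have "k < d"
      using that(2) by simp
    then obtain z where z: "z \<in> {p, q}" "z k \<in> P k"
      using slabs by blast
    have "T (3 * k + 1) = slab d k (P k)"
      using P \<open>k < d\<close> by blast
    then have "cut z \<in> T i"
      unfolding 1 using in_slab[OF z] by simp
    with z(1) show ?thesis
      by blast
  next
    case (2 k)
    then have "k < d"
      using that(2) by simp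
    then obtain z where z: "z \<in> {p, q}" "z k \<in> Q k"
      using slabs by blast
    have "T (3 * k + 2) = slab d k (Q k)"
      using Q \<open>k < d\<close> by blast
    then have "cut z \<in> T i"
      unfolding 2 using in_slab[OF z] by simp
    with z(1) show ?thesis
      by blast
  next
    case (3 k)
    then have "Suc k < d"
      using that(2) by simp
    then obtain z where z: "z \<in> {p, q}" "z k \<in> fst (M k)" "z (Suc k) \<in> snd (M k)"
      using couplings by blast
    have "T (3 * k + 3) = coupling_box d k (fst (M k)) (snd (M k))"
      using M \<open>Suc k < d\<close> by blast
    then have "cut z \<in> T i"
      unfolding 3 using in_coupling[OF z] by simp
    with z(1) show ?thesis
      by blast
  qed
  then show ?thesis
    unfolding pierceable_def
    by (intro exI[of _ "{cut p, cut q}"]) (auto simp: card_insert_if euclid_def cut_def)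
qed

lemma hc_property_two_lower:
  assumes "0 < h" "h \<le> 3 * d - 1"
  shows "\<not> hc_property d 2 h"
proof
  assume "hc_property d 2 h"
  moreover have "\<forall>i\<in>{1..h}. finite (gadget_family d i) \<and> (\<forall>B\<in>gadget_family d i. is_box d B)"
    by (simp add: gadget_family_finite_nonempty gadget_family_is_box)
  moreover have "pierceable d 2 (C ` {1..h})" if C: "colorful (gadget_family d) h h C" for C
  proof -
    have "\<forall>i\<in>{1..3 * d - 1}. gadget_family d i \<noteq> {}"
      by (simp add: gadget_family_finite_nonempty)
    then obtain T where "\<forall>i\<in>{1..3 * d - 1}. T i \<in> gadget_family d i"
      and "C ` {1..h} \<subseteq> T ` {1..3 * d - 1}"
      by (rule colorful_subset_transversal[OF C assms(2)])
    then show ?thesis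
      by (meson gadget_transversal_pierceable pierceable_subset)
  qed
  ultimately obtain i where "i \<in> {1..h}" "pierceable d 2 (gadget_family d i)"
    unfolding hc_property_def by blast
  moreover have "\<not> pierceable d 2 (gadget_family d i)" if "i \<in> {1..h}"
    using that assms(2) by (intro gadget_family_not_pierceable) auto
  ultimately show False
    by blast
qed

section \<open>Two points: the upper bound\<close>

definition available :: "('c \<Rightarrow> 'a set) \<Rightarrow> 'c set \<Rightarrow> 'c set \<Rightarrow> ('c \<Rightarrow> 'a) \<Rightarrow> 'a set" where
  "available F Col U g = g ` U \<union> (\<Union>c\<in>Col - U. F c)"

lemma available_update_subset:
  "available F Col (insert c U) (g(c := Y)) \<subseteq> insert Y (available F Col U g)"
  unfolding available_def by auto

lemma available_nonempty:
  assumes "finite Col" "U \<subseteq> Col" "card U < card Col" "\<forall>c\<in>Col. F c \<noteq> {}"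
  shows "available F Col U g \<noteq> {}"
proof -
  have "\<not> Col \<subseteq> U"
    using assms(1-3) card_mono[of U Col] by (metis finite_subset leD)
  then show ?thesis
    using assms(4) unfolding available_def by blast
qed

lemma extremal_selection:
  fixes \<phi> :: "'i \<Rightarrow> 'a \<Rightarrow> real"
  assumes "finite I" "finite Col" "card I \<le> card Col" "\<forall>c\<in>Col. finite (F c) \<and> F c \<noteq> {}"
  shows "\<exists>U g X. U \<subseteq> Col \<and> card U \<le> card I \<and> (\<forall>c\<in>U. g c \<in> F c) \<and>
    (\<forall>i\<in>I. X i \<in> g ` U \<and> (\<forall>B\<in>available F Col U g. \<phi> i (X i) \<le> \<phi> i B))"
  using assms(1,3)
proof (induction I rule: finite_induct)
  case empty
  show ?case
    by (intro exI[of _ "{}"]) simp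
next
  case (insert i I)
  then obtain U g X where U: "U \<subseteq> Col" "card U \<le> card I" "\<forall>c\<in>U. g c \<in> F c"
    and X: "\<forall>i'\<in>I. X i' \<in> g ` U \<and> (\<forall>B\<in>available F Col U g. \<phi> i' (X i') \<le> \<phi> i' B)"
    by auto
  have "finite (available F Col U g)"
    unfolding available_def using U(1) assms(2,4) finite_subset[OF U(1)] by auto
  moreover have "card U < card Col"
    using U(2) insert by simp
  then have "available F Col U g \<noteq> {}"
    using available_nonempty[OF assms(2) U(1)] assms(4) by blast
  ultimately obtain Y where Y: "Y \<in> available F Col U g"
    and Y_min: "\<forall>B\<in>available F Col U g. \<phi> i Y \<le> \<phi> i B"
    using arg_min_if_finite[of _ "\<phi> i"] by (metis not_less)
  obtain c where c: "c \<in> Col" "Y \<in> F c" "c \<in> U \<Longrightarrow> g c = Y"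
    using Y U unfolding available_def by blast
  define U' where "U' = insert c U"
  define g' where "g' = g(c := Y)"
  have sub: "available F Col U' g' \<subseteq> available F Col U g"
    using available_update_subset[of F Col c U g Y] Y unfolding U'_def g'_def by blast
  have "(X(i := Y)) i' \<in> g' ` U' \<and> (\<forall>B\<in>available F Col U' g'. \<phi> i' ((X(i := Y)) i') \<le> \<phi> i' B)"
    if "i' \<in> insert i I" for i'
  proof (cases "i' = i")
    case True
    have "Y \<in> g' ` U'"
      unfolding U'_def g'_def by simp
    with True show ?thesis
      using Y_min sub by auto
  next
    case False
    with that have "X i' \<in> g ` U" "\<forall>B\<in>available F Col U g. \<phi> i' (X i') \<le> \<phi> i' B"
      using X by auto
    moreover have "g ` U \<subseteq> g' ` U'"
      using c(3) unfolding U'_def g'_def by force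
    ultimately show ?thesis
      using False sub by auto
  qed
  moreover have "U' \<subseteq> Col" "\<forall>c'\<in>U'. g' c' \<in> F c'"
    using U c unfolding U'_def g'_def by auto
  moreover have "card U' \<le> Suc (card U)"
    using finite_subset[OF U(1) assms(2)] unfolding U'_def by (simp add: card_insert_if)
  then have "card U' \<le> card (insert i I)"
    using U(2) insert(1,2) by simp
  ultimately show ?case
    by blast
qed

lemma extremal_boxes:
  assumes "finite Col" "2 * d \<le> card Col" "\<forall>c\<in>Col. finite (F c) \<and> F c \<noteq> {}"
  obtains U g R L where "U \<subseteq> Col" "card U \<le> 2 * d" "\<forall>c\<in>U. g c \<in> F c"
    and "\<forall>j<d. R j \<in> g ` U \<and> L j \<in> g ` U"
    and "\<forall>j<d. \<forall>B\<in>available F Col U g. box_hi (R j) j \<le> box_hi B j \<and> box_lo B j \<le> box_lo (L j) j"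
proof -
  define \<phi> where "\<phi> jb B = (if snd jb then box_hi B (fst jb) else - box_lo B (fst jb))"
    for jb :: "nat \<times> bool" and B
  have "card ({..<d} \<times> (UNIV :: bool set)) = 2 * d"
    by (simp add: card_cartesian_product)
  then obtain U g X where U: "U \<subseteq> Col" "card U \<le> 2 * d" "\<forall>c\<in>U. g c \<in> F c"
    and X: "\<forall>jb\<in>{..<d} \<times> UNIV. X jb \<in> g ` U \<and> (\<forall>B\<in>available F Col U g. \<phi> jb (X jb) \<le> \<phi> jb B)"
    using extremal_selection[of "{..<d} \<times> UNIV" Col F \<phi>] assms by auto
  have selected: "\<forall>j<d. X (j, True) \<in> g ` U \<and> X (j, False) \<in> g ` U"
    using X by blast
  have extremal: "\<forall>j<d. \<forall>B\<in>available F Col U g.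
      box_hi (X (j, True)) j \<le> box_hi B j \<and> box_lo B j \<le> box_lo (X (j, False)) j"
  proof (intro allI impI ballI)
    fix j B assume "j < d" "B \<in> available F Col U g"
    then have "\<phi> (j, True) (X (j, True)) \<le> \<phi> (j, True) B"
      and "\<phi> (j, False) (X (j, False)) \<le> \<phi> (j, False) B"
      using X by auto
    then show "box_hi (X (j, True)) j \<le> box_hi B j \<and> box_lo B j \<le> box_lo (X (j, False)) j"
      unfolding \<phi>_def by simp
  qed
  show ?thesis
    by (rule that[OF U selected extremal])
qed

definition symdiff3 :: "'a set \<Rightarrow> 'a set \<Rightarrow> 'a set \<Rightarrow> 'a set" where
  "symdiff3 s t w = {j. (j \<in> s) = ((j \<in> t) = (j \<in> w))}"

definition affine_family :: "'a set set \<Rightarrow> bool" where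
  "affine_family W \<longleftrightarrow> (\<forall>s\<in>W. \<forall>t\<in>W. \<forall>w\<in>W. symdiff3 s t w \<in> W)"

lemma symdiff3_cancel: "symdiff3 (symdiff3 s a b) s a = b"
  unfolding symdiff3_def by auto

lemma inj_symdiff3: "inj (\<lambda>s. symdiff3 s a b)"
  unfolding symdiff3_def inj_def set_eq_iff by auto

lemma card_affine_Int_le_half:
  assumes "finite W" "affine_family W" "affine_family V" "t \<in> W - V"
  shows "2 * card (W \<inter> V) \<le> card W"
proof (cases "W \<inter> V = {}")
  case False
  then obtain s0 where s0: "s0 \<in> W \<inter> V"
    by blast
  \<comment> \<open>Translation by \<open>s0 + t\<close> maps \<open>W \<inter> V\<close> injectively into \<open>W - V\<close>.\<close>
  have "(\<lambda>s. symdiff3 s s0 t) ` (W \<inter> V) \<subseteq> W - V"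
  proof
    fix x assume "x \<in> (\<lambda>s. symdiff3 s s0 t) ` (W \<inter> V)"
    then obtain s where s: "s \<in> W" "s \<in> V" "x = symdiff3 s s0 t"
      by blast
    have "x \<in> W"
      using assms(2,4) s s0 unfolding affine_family_def by blast
    moreover have "x \<notin> V"
    proof
      assume "x \<in> V"
      then have "symdiff3 x s s0 \<in> V"
        using assms(3) s s0 unfolding affine_family_def by blast
      then show False
        using assms(4) s(3) by (simp add: symdiff3_cancel)
    qed
    ultimately show "x \<in> W - V"
      by blast
  qed
  then have "card (W \<inter> V) \<le> card (W - V)"
    using assms(1) inj_on_subset[OF inj_symdiff3, of "W \<inter> V"] by (intro card_inj_on_le) auto
  moreover have "card (W - V) = card W - card (W \<inter> V)"
    using assms(1) by (simp add: Diff_Int_distrib card_Diff_subset_Int inf_commute)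
  moreover have "card (W \<inter> V) \<le> card W"
    using assms(1) by (simp add: card_mono)
  ultimately show ?thesis
    by linarith
qed simp

lemma affine_family_sign_pattern:
  "affine_family {s \<in> Pow {..<d}. (\<forall>j<d. if j \<in> s then u j else v j) \<or>
                                  (\<forall>j<d. if j \<in> s then v j else u j)}"
proof -
  define E where "E s c \<longleftrightarrow> (\<forall>j<d. if (j \<in> s) = c then u j else v j)" for s c
  have E_symdiff3: "E (symdiff3 s t w) (a = (b = c))" if "E s a" "E t b" "E w c" for s t w a b c
    using that unfolding E_def symdiff3_def by (auto split: if_splits)
  have "{s \<in> Pow {..<d}. (\<forall>j<d. if j \<in> s then u j else v j) \<or> (\<forall>j<d. if j \<in> s then v j else u j)}
      = {s \<in> Pow {..<d}. \<exists>c. E s c}"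
    unfolding E_def by (auto simp: ex_bool_eq)
  moreover have "affine_family {s \<in> Pow {..<d}. \<exists>c. E s c}"
    unfolding affine_family_def
  proof (intro ballI)
    fix s t w assume "s \<in> {s \<in> Pow {..<d}. \<exists>c. E s c}" "t \<in> {s \<in> Pow {..<d}. \<exists>c. E s c}"
      "w \<in> {s \<in> Pow {..<d}. \<exists>c. E s c}"
    then obtain a b c where "E s a" "E t b" "E w c" "s \<subseteq> {..<d}" "t \<subseteq> {..<d}" "w \<subseteq> {..<d}"
      by auto
    then have "E (symdiff3 s t w) (a = (b = c))" "symdiff3 s t w \<subseteq> {..<d}"
      using E_symdiff3 by (auto simp: symdiff3_def)
    then show "symdiff3 s t w \<in> {s \<in> Pow {..<d}. \<exists>c. E s c}"
      by blast
  qed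
  ultimately show ?thesis
    by simp
qed

definition corner :: "nat \<Rightarrow> (nat \<Rightarrow> real) \<Rightarrow> (nat \<Rightarrow> real) \<Rightarrow> nat set \<Rightarrow> nat \<Rightarrow> real" where
  "corner d r l s j = (if j < d then if j \<in> s then r j else l j else 0)"

text \<open>Since \<open>corner d l r s = corner d r l ({..<d} - s)\<close>, \<open>hit_signs d r l \<B>\<close> is the set of sign
  vectors whose pair of opposite corners of the grid \<open>\<Prod>j<d. {l j, r j}\<close> meets every box in \<open>\<B>\<close>.\<close>

definition hit_signs :: "nat \<Rightarrow> (nat \<Rightarrow> real) \<Rightarrow> (nat \<Rightarrow> real) \<Rightarrow> (nat \<Rightarrow> real) set set \<Rightarrow> nat set set"
  where "hit_signs d r l \<B> = {s \<in> Pow {..<d}. \<forall>B\<in>\<B>. corner d r l s \<in> B \<or> corner d l r s \<in> B}"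

lemma corner_in_euclid: "corner d r l s \<in> euclid d"
  unfolding corner_def euclid_def by simp

lemma corner_compl: "corner d r l ({..<d} - s) = corner d l r s"
  unfolding corner_def by auto

lemma hit_signs_compl: "s \<in> hit_signs d r l \<B> \<Longrightarrow> {..<d} - s \<in> hit_signs d r l \<B>"
  unfolding hit_signs_def using corner_compl[of d r l s] corner_compl[of d l r s] by auto

lemma hit_signs_insert: "hit_signs d r l (insert B \<B>) = hit_signs d r l \<B> \<inter> hit_signs d r l {B}"
  unfolding hit_signs_def by auto

lemma finite_hit_signs: "finite (hit_signs d r l \<B>)"
  unfolding hit_signs_def by simp

lemma affine_hit_signs_box:
  assumes "is_box d B"
  shows "affine_family (hit_signs d r l {B})"
proof -
  define inside where "inside a j \<longleftrightarrow> box_lo B j \<le> a j \<and> a j \<le> box_hi B j" for a j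
  have "corner d a b s \<in> B \<longleftrightarrow> (\<forall>j<d. if j \<in> s then inside a j else inside b j)" for a b s
    using mem_box_iff[OF assms] corner_in_euclid unfolding corner_def inside_def by (auto split: if_splits)
  then have "hit_signs d r l {B} = {s \<in> Pow {..<d}. (\<forall>j<d. if j \<in> s then inside r j else inside l j) \<or>
      (\<forall>j<d. if j \<in> s then inside l j else inside r j)}"
    unfolding hit_signs_def by simp
  then show ?thesis
    by (simp only: affine_family_sign_pattern)
qed

lemma hit_signs_antimono: "\<A> \<subseteq> \<B> \<Longrightarrow> hit_signs d r l \<B> \<subseteq> hit_signs d r l \<A>"
  unfolding hit_signs_def by auto

lemma affine_hit_signs:
  assumes "\<forall>B\<in>\<B>. is_box d B"
  shows "affine_family (hit_signs d r l \<B>)"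
  unfolding affine_family_def
proof (intro ballI)
  fix s t w assume stw: "s \<in> hit_signs d r l \<B>" "t \<in> hit_signs d r l \<B>" "w \<in> hit_signs d r l \<B>"
  have "symdiff3 s t w \<in> hit_signs d r l {B}" if "B \<in> \<B>" for B
  proof -
    have "{s, t, w} \<subseteq> hit_signs d r l {B}"
      using stw hit_signs_antimono[of "{B}" \<B>] that by blast
    then show ?thesis
      using affine_hit_signs_box[of d B r l] assms that unfolding affine_family_def by simp
  qed
  moreover have "symdiff3 s t w \<subseteq> {..<d}"
    using stw unfolding hit_signs_def symdiff3_def by auto
  ultimately show "symdiff3 s t w \<in> hit_signs d r l \<B>"
    by (auto simp: hit_signs_def)
qed

lemma hit_signs_eq_empty:
  assumes "0 < d" "card (hit_signs d r l \<B>) \<le> 1"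
  shows "hit_signs d r l \<B> = {}"
proof (rule ccontr)
  assume "hit_signs d r l \<B> \<noteq> {}"
  then obtain s where s: "s \<in> hit_signs d r l \<B>"
    by blast
  moreover have "{..<d} - s \<noteq> s"
    using assms(1) by blast
  ultimately have "card {s, {..<d} - s} \<le> card (hit_signs d r l \<B>)"
    using hit_signs_compl finite_hit_signs by (intro card_mono) auto
  with \<open>{..<d} - s \<noteq> s\<close> assms(2) show False
    by simp
qed

lemma exists_box_halving_hit_signs:
  assumes "\<forall>B\<in>\<B>. is_box d B" "\<forall>B\<in>G. is_box d B" "\<not> pierceable d 2 G"
  shows "\<exists>B\<in>G. 2 * card (hit_signs d r l (insert B \<B>)) \<le> card (hit_signs d r l \<B>)"
proof (cases "hit_signs d r l \<B> = {}")
  case True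
  moreover have "G \<noteq> {}"
    using assms(3) pierceable_empty by metis
  then obtain B where "B \<in> G"
    by blast
  ultimately have "hit_signs d r l (insert B \<B>) = {}"
    using hit_signs_antimono[of \<B> "insert B \<B>" d r l] by blast
  then have "2 * card (hit_signs d r l (insert B \<B>)) \<le> card (hit_signs d r l \<B>)"
    by simp
  with \<open>B \<in> G\<close> show ?thesis
    by blast
next
  case False
  then obtain s where s: "s \<in> hit_signs d r l \<B>"
    by blast
  let ?A = "{corner d r l s, corner d l r s}"
  have A: "?A \<subseteq> euclid d" "finite ?A" "card ?A \<le> 2"
    using corner_in_euclid by (auto simp: card_insert_if)
  have "\<exists>B\<in>G. B \<inter> ?A = {}"
  proof (rule contrapos_np[OF assms(3)])
    assume "\<not> (\<exists>B\<in>G. B \<inter> ?A = {})"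
    with A show "pierceable d 2 G"
      unfolding pierceable_def by (intro exI[of _ ?A]) simp
  qed
  then obtain B where B: "B \<in> G" "corner d r l s \<notin> B" "corner d l r s \<notin> B"
    by blast
  then have "s \<in> hit_signs d r l \<B> - hit_signs d r l {B}"
    using s unfolding hit_signs_def by simp
  moreover have "affine_family (hit_signs d r l \<B>)" "affine_family (hit_signs d r l {B})"
    using assms(1,2) B(1) by (simp_all add: affine_hit_signs affine_hit_signs_box)
  ultimately have "2 * card (hit_signs d r l (insert B \<B>)) \<le> card (hit_signs d r l \<B>)"
    by (subst hit_signs_insert) (rule card_affine_Int_le_half[OF finite_hit_signs])
  with B(1) show ?thesis
    by blast
qed

lemma greedy_halving:
  assumes "finite K" "\<forall>c\<in>K. (\<forall>B\<in>F c. is_box d B) \<and> \<not> pierceable d 2 (F c)"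
  shows "\<exists>f. (\<forall>c\<in>K. f c \<in> F c) \<and> card (hit_signs d r l (f ` K)) * 2 ^ card K \<le> 2 ^ d"
  using assms
proof (induction K rule: finite_induct)
  case empty
  have "hit_signs d r l {} = Pow {..<d}"
    unfolding hit_signs_def by blast
  then show ?case
    by (simp add: card_Pow)
next
  case (insert c K)
  then obtain f where f: "\<forall>c'\<in>K. f c' \<in> F c'" "card (hit_signs d r l (f ` K)) * 2 ^ card K \<le> 2 ^ d"
    by auto
  have "\<forall>B\<in>f ` K. is_box d B" "\<forall>B\<in>F c. is_box d B" "\<not> pierceable d 2 (F c)"
    using insert.prems f(1) by auto
  then have "\<exists>B\<in>F c. 2 * card (hit_signs d r l (insert B (f ` K))) \<le> card (hit_signs d r l (f ` K))"
    by (rule exists_box_halving_hit_signs)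
  then obtain B where B: "B \<in> F c"
    and halving: "2 * card (hit_signs d r l (insert B (f ` K))) \<le> card (hit_signs d r l (f ` K))"
    by blast
  have image: "(f(c := B)) ` insert c K = insert B (f ` K)"
    using insert.hyps(2) by auto
  have "card (hit_signs d r l ((f(c := B)) ` insert c K)) * 2 ^ card (insert c K)
      = 2 * card (hit_signs d r l (insert B (f ` K))) * 2 ^ card K"
    using insert.hyps unfolding image by simp
  also have "\<dots> \<le> card (hit_signs d r l (f ` K)) * 2 ^ card K"
    using halving by simp
  also have "\<dots> \<le> 2 ^ d"
    by (rule f(2))
  finally show ?case
    using f(1) B by (intro exI[of _ "f(c := B)"]) auto
qed

lemma corner_coordinate_choice:
  fixes a b p q r l :: real
  assumes "r \<le> b" "a \<le> l" "p \<le> r \<or> q \<le> r" "l \<le> p \<or> l \<le> q"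
  shows "a \<le> p \<Longrightarrow> p \<le> b \<Longrightarrow> (if p \<le> r then a \<le> r \<and> r \<le> b else a \<le> l \<and> l \<le> b)"
    and "a \<le> q \<Longrightarrow> q \<le> b \<Longrightarrow> (if p \<le> r then a \<le> l \<and> l \<le> b else a \<le> r \<and> r \<le> b)"
  using assms by auto

lemma sign_vector_of_two_points:
  assumes boxes: "\<forall>B\<in>\<B>. is_box d B \<and> (p \<in> B \<or> q \<in> B) \<and> (\<forall>j<d. r j \<le> box_hi B j \<and> box_lo B j \<le> l j)"
    and sides: "\<forall>j<d. (p j \<le> r j \<or> q j \<le> r j) \<and> (l j \<le> p j \<or> l j \<le> q j)"
  shows "{j. j < d \<and> p j \<le> r j} \<in> hit_signs d r l \<B>"
  unfolding hit_signs_def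
proof (intro CollectI conjI ballI)
  fix B assume "B \<in> \<B>"
  then have B: "is_box d B" "p \<in> B \<or> q \<in> B" "\<forall>j<d. r j \<le> box_hi B j \<and> box_lo B j \<le> l j"
    using boxes by auto
  let ?s = "{j. j < d \<and> p j \<le> r j}"
  from B(2) show "corner d r l ?s \<in> B \<or> corner d l r ?s \<in> B"
  proof
    assume "p \<in> B"
    have "box_lo B j \<le> corner d r l ?s j \<and> corner d r l ?s j \<le> box_hi B j" if "j < d" for j
    proof -
      have "box_lo B j \<le> p j" "p j \<le> box_hi B j"
        using \<open>p \<in> B\<close> mem_box_iff[OF B(1)] that by auto
      then show ?thesis
        using corner_coordinate_choice(1)[where a = "box_lo B j" and b = "box_hi B j" and
            p = "p j" and q = "q j" and r = "r j" and l = "l j"] B(3) sides that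
        unfolding corner_def by simp
    qed
    then show ?thesis
      using mem_box_iff[OF B(1)] corner_in_euclid by simp
  next
    assume "q \<in> B"
    have "box_lo B j \<le> corner d l r ?s j \<and> corner d l r ?s j \<le> box_hi B j" if "j < d" for j
    proof -
      have "box_lo B j \<le> q j" "q j \<le> box_hi B j"
        using \<open>q \<in> B\<close> mem_box_iff[OF B(1)] that by auto
      then show ?thesis
        using corner_coordinate_choice(2)[where a = "box_lo B j" and b = "box_hi B j" and
            p = "p j" and q = "q j" and r = "r j" and l = "l j"] B(3) sides that
        unfolding corner_def by simp
    qed
    then show ?thesis
      using mem_box_iff[OF B(1)] corner_in_euclid by simp
  qed
qed auto

lemma subset_doubleton_if_card_le_2:
  assumes "finite A" "card A \<le> 2"
  shows "\<exists>p q. A \<subseteq> {p, q}"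
proof (cases "A = {}")
  case False
  then obtain p where "p \<in> A"
    by blast
  with assms have "card (A - {p}) \<le> 1"
    by simp
  with assms(1) have singleton: "\<forall>a\<in>A - {p}. \<forall>b\<in>A - {p}. a = b"
    using card_le_Suc0_iff_eq[of "A - {p}"] by simp
  show ?thesis
  proof (cases "A - {p} = {}")
    case False
    then obtain q where "q \<in> A - {p}"
      by blast
    with singleton have "A \<subseteq> {p, q}"
      by blast
    then show ?thesis
      by blast
  qed blast
qed blast

lemma pierceable_two_points:
  assumes "pierceable d 2 \<F>"
  obtains p q where "\<forall>F\<in>\<F>. p \<in> F \<or> q \<in> F"
proof -
  obtain A where A: "finite A" "card A \<le> 2" "\<forall>F\<in>\<F>. F \<inter> A \<noteq> {}"
    using assms unfolding pierceable_def by blast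
  then obtain p q where "A \<subseteq> {p, q}"
    using subset_doubleton_if_card_le_2 by blast
  with A(3) have "\<forall>F\<in>\<F>. p \<in> F \<or> q \<in> F"
    by blast
  then show ?thesis
    by (rule that)
qed

lemma colorful_tuple_not_pierceable:
  assumes boxes: "\<forall>c\<in>Col. \<forall>B\<in>F c. is_box d B"
    and U: "U \<subseteq> Col" and RL: "\<forall>j<d. R j \<in> g ` U \<and> L j \<in> g ` U"
    and extremal: "\<forall>j<d. \<forall>B\<in>available F Col U g.
      box_hi (R j) j \<le> box_hi B j \<and> box_lo B j \<le> box_lo (L j) j"
    and K: "K \<subseteq> Col - U" "\<forall>c\<in>K. f c \<in> F c"
    and no_signs: "hit_signs d (\<lambda>j. box_hi (R j) j) (\<lambda>j. box_lo (L j) j) (f ` K) = {}"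
    and C: "\<forall>i\<in>Col. C i \<in> F i" "\<forall>i\<in>U. C i = g i" "\<forall>i\<in>K. C i = f i"
  shows "\<not> pierceable d 2 (C ` Col)"
proof
  assume "pierceable d 2 (C ` Col)"
  then obtain p q where pq: "\<forall>B\<in>C ` Col. p \<in> B \<or> q \<in> B"
    by (rule pierceable_two_points)
  define r where "r j = box_hi (R j) j" for j
  define l where "l j = box_lo (L j) j" for j
  have "{j. j < d \<and> p j \<le> r j} \<in> hit_signs d r l (f ` K)"
  proof (rule sign_vector_of_two_points)
    have coords: "box_lo B j \<le> z j \<and> z j \<le> box_hi B j" if "B \<in> C ` Col" "z \<in> B" "j < d" for B z j
      using that C(1) boxes mem_box_iff by blast
    have "g ` U \<subseteq> C ` Col"
      using C(2) U by force
    show "\<forall>j<d. (p j \<le> r j \<or> q j \<le> r j) \<and> (l j \<le> p j \<or> l j \<le> q j)"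
    proof (intro allI impI)
      fix j assume "j < d"
      then have R: "R j \<in> C ` Col" and L: "L j \<in> C ` Col"
        using RL \<open>g ` U \<subseteq> C ` Col\<close> by blast+
      then have "p \<in> R j \<or> q \<in> R j" "p \<in> L j \<or> q \<in> L j"
        using pq by blast+
      then show "(p j \<le> r j \<or> q j \<le> r j) \<and> (l j \<le> p j \<or> l j \<le> q j)"
        using coords[OF R _ \<open>j < d\<close>] coords[OF L _ \<open>j < d\<close>] unfolding r_def l_def by blast
    qed
    show "\<forall>B\<in>f ` K. is_box d B \<and> (p \<in> B \<or> q \<in> B) \<and> (\<forall>j<d. r j \<le> box_hi B j \<and> box_lo B j \<le> l j)"
    proof
      fix B assume "B \<in> f ` K"
      then obtain c where c: "c \<in> K" "c \<in> Col - U" "B = f c"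
        using K(1) by blast
      then have "B \<in> available F Col U g" "is_box d B"
        using K(2) boxes unfolding available_def by auto
      moreover have "B \<in> C ` Col"
        using C(3) c by force
      then have "p \<in> B \<or> q \<in> B"
        using pq by blast
      ultimately show "is_box d B \<and> (p \<in> B \<or> q \<in> B) \<and> (\<forall>j<d. r j \<le> box_hi B j \<and> box_lo B j \<le> l j)"
        using extremal unfolding r_def l_def by simp
    qed
  qed
  with no_signs show False
    unfolding r_def l_def by simp
qed

lemma hc_property_two_upper:
  assumes "0 < d"
  shows "hc_property d 2 (3 * d)"
  unfolding hc_property_def
proof (intro allI impI)
  fix F :: "nat \<Rightarrow> (nat \<Rightarrow> real) set set"
  define Col where "Col = {1..3 * d}"
  assume "(\<forall>i\<in>{1..3 * d}. finite (F i) \<and> (\<forall>B\<in>F i. is_box d B)) \<and>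
    (\<forall>C. colorful F (3 * d) (3 * d) C \<longrightarrow> pierceable d 2 (C ` {1..3 * d}))"
  then have boxes: "\<forall>c\<in>Col. finite (F c) \<and> (\<forall>B\<in>F c. is_box d B)"
    and colorful_pierceable: "\<forall>C. colorful F (3 * d) (3 * d) C \<longrightarrow> pierceable d 2 (C ` Col)"
    unfolding Col_def by auto
  show "\<exists>i\<in>{1..3 * d}. pierceable d 2 (F i)"
  proof (rule ccontr)
    assume "\<not> ?thesis"
    then have not_pierceable: "\<forall>c\<in>Col. \<not> pierceable d 2 (F c)"
      unfolding Col_def by blast
    then have nonempty: "\<forall>c\<in>Col. F c \<noteq> {}"
      using pierceable_empty by metis
    have Col: "finite Col" "card Col = 3 * d"
      unfolding Col_def by simp_all
    have "2 * d \<le> card Col"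
      using Col by simp
    moreover have "\<forall>c\<in>Col. finite (F c) \<and> F c \<noteq> {}"
      using boxes nonempty by blast
    ultimately obtain U g R L where U: "U \<subseteq> Col" "card U \<le> 2 * d" "\<forall>c\<in>U. g c \<in> F c"
      and RL: "\<forall>j<d. R j \<in> g ` U \<and> L j \<in> g ` U"
      and extremal: "\<forall>j<d. \<forall>B\<in>available F Col U g.
        box_hi (R j) j \<le> box_hi B j \<and> box_lo B j \<le> box_lo (L j) j"
      by (rule extremal_boxes[OF Col(1)])
    have "card (Col - U) = card Col - card U"
      using U(1) Col(1) by (simp add: card_Diff_subset finite_subset)
    then have "d \<le> card (Col - U)"
      using U(2) Col(2) by simp
    then obtain K where K: "K \<subseteq> Col - U" "card K = d" "finite K"
      by (rule obtain_subset_with_card_n)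
    have "\<forall>c\<in>K. (\<forall>B\<in>F c. is_box d B) \<and> \<not> pierceable d 2 (F c)"
      using K(1) boxes not_pierceable by blast
    then obtain f where f: "\<forall>c\<in>K. f c \<in> F c"
      and "card (hit_signs d (\<lambda>j. box_hi (R j) j) (\<lambda>j. box_lo (L j) j) (f ` K)) * 2 ^ card K \<le> 2 ^ d"
      using greedy_halving[OF K(3)] by blast
    then have no_signs: "hit_signs d (\<lambda>j. box_hi (R j) j) (\<lambda>j. box_lo (L j) j) (f ` K) = {}"
      using hit_signs_eq_empty[OF assms] K(2) by simp
    have "\<forall>i\<in>U \<union> K. (if i \<in> U then g i else f i) \<in> F i"
      using U(3) f by auto
    with nonempty obtain C where C: "\<forall>i\<in>Col. C i \<in> F i"
      "\<forall>i\<in>U \<union> K. C i = (if i \<in> U then g i else f i)"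
      by (rule exists_choice_extending)
    then have "colorful F (3 * d) (3 * d) C"
      unfolding Col_def by (intro colorful_id) auto
    moreover have "\<not> pierceable d 2 (C ` Col)"
    proof (rule colorful_tuple_not_pierceable)
      show "\<forall>c\<in>Col. \<forall>B\<in>F c. is_box d B"
        using boxes by blast
      show "\<forall>i\<in>U. C i = g i" "\<forall>i\<in>K. C i = f i"
        using C(2) K(1) by auto
    qed (use U RL extremal K f no_signs C(1) in auto)
    ultimately show False
      using colorful_pierceable by blast
  qed
qed

theorem hc_two:
  assumes "0 < d"
  shows "hc d 2 = 3 * d"
  using assms hc_property_two_upper hc_property_two_lower by (intro hc_eqI) auto

theorem theorem4:
  shows "(\<forall>n::nat. n \<ge> 1 \<longrightarrow> hc 1 n = n + 1) \<and> (\<forall>d::nat. d \<ge> 1 \<longrightarrow> hc d 2 = 3 * d)"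
  using hc_one hc_two by simp

end
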